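(* Let $N\ge1$, $\mathcal D=\{1,\dots,N\}$, and let $\mathcal G_{el}$ be an undirected graph on $\mathcal D$ with neighbor sets $\mathcal N_i$. For each $i$ let $C_{ti},L^C_{ti},R^C_{ti},R_{Li}>0$ and gains satisfying $k^C_{1,i}<1$, $k^C_{2,i}<R^C_{ti}$, $k^C_{3,i}>0$; for each edge let $R_{ij}=R_{ji}>0$. Fix $\bar\sigma>0$, set $\eta_i=\bar\sigma C_{ti}$, $p^C_{22,i}=\frac{L^C_{ti}\eta_i}{C_{ti}(1-k^C_{1,i})}$, $P_i^C=\mathrm{diag}\big(\eta_i,p^C_{22,i},\frac{k^C_{3,i}}{L^C_{ti}}p^C_{22,i}\big)$ and $\mathbf P^C=\mathrm{diag}(P_1^C,\dots,P_N^C)$. Then $(\mathbf F^C)^T\mathbf P^C+\mathbf P^C\mathbf F^C\le 0$.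
   Context: $e_1=(1,0,0)^T$. $F_i^C=\begin{bmatrix}0&\frac{1}{C_{ti}}&0\\ \frac{k^C_{1,i}-1}{L^C_{ti}}&\frac{k^C_{2,i}-R^C_{ti}}{L^C_{ti}}&\frac{k^C_{3,i}}{L^C_{ti}}\\ 0&-1&0\end{bmatrix}$. $\mathbf F^C\in\mathbb{R}^{3N\times3N}$ is the closed-loop matrix of the network of current-controlled units: its $(i,i)$ block is $F_i^C-\Big(\frac{1}{R_{Li}C_{ti}}+\sum_{j\in\mathcal N_i}\frac{1}{R_{ij}C_{ti}}\Big)e_1e_1^T$, its $(i,j)$ block for $j\ne i$ is $\frac{1}{R_{ij}C_{ti}}e_1e_1^T$ if $j\in\mathcal N_i$ and $0$ otherwise. Matrix inequalities are in the semidefinite sense. *)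

theory Defs
  imports Main "Jordan_Normal_Form.Matrix"
begin

text \<open>Units are indexed by 0..<N (the paper's 1..N shifted by one).
  Parameters are functions of the unit index; R i j is the line resistance.\<close>

definition neg_semidef :: "nat \<Rightarrow> real mat \<Rightarrow> bool" where
  "neg_semidef n M \<longleftrightarrow> M \<in> carrier_mat n n \<and>
     (\<forall>x \<in> carrier_vec n. x \<bullet> (M *\<^sub>v x) \<le> 0)"

definition E11 :: "real mat" where
  "E11 = mat 3 3 (\<lambda>(a,b). if a = 0 \<and> b = 0 then 1 else 0)"

definition FiC :: "real \<Rightarrow> real \<Rightarrow> real \<Rightarrow> real \<Rightarrow> real \<Rightarrow> real \<Rightarrow> real mat" where
  "FiC Ct Lt Rt k1 k2 k3 = mat_of_rows_list 3
     [[0, 1 / Ct, 0],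
      [(k1 - 1) / Lt, (k2 - Rt) / Lt, k3 / Lt],
      [0, -1, 0]]"

definition FC_block ::
  "(nat \<Rightarrow> nat set) \<Rightarrow> (nat \<Rightarrow> real) \<Rightarrow> (nat \<Rightarrow> real) \<Rightarrow> (nat \<Rightarrow> real) \<Rightarrow> (nat \<Rightarrow> real)
   \<Rightarrow> (nat \<Rightarrow> nat \<Rightarrow> real) \<Rightarrow> (nat \<Rightarrow> real) \<Rightarrow> (nat \<Rightarrow> real) \<Rightarrow> (nat \<Rightarrow> real)
   \<Rightarrow> nat \<Rightarrow> nat \<Rightarrow> real mat" where
  "FC_block Nb Ct Lt Rt RL R k1 k2 k3 i j =
     (if i = j then
        FiC (Ct i) (Lt i) (Rt i) (k1 i) (k2 i) (k3 i)
        - (1 / (RL i * Ct i) + (\<Sum>l\<in>Nb i. 1 / (R i l * Ct i))) \<cdot>\<^sub>m E11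
      else if j \<in> Nb i then (1 / (R i j * Ct i)) \<cdot>\<^sub>m E11
      else 0\<^sub>m 3 3)"

definition FC ::
  "nat \<Rightarrow> (nat \<Rightarrow> nat set) \<Rightarrow> (nat \<Rightarrow> real) \<Rightarrow> (nat \<Rightarrow> real) \<Rightarrow> (nat \<Rightarrow> real) \<Rightarrow> (nat \<Rightarrow> real)
   \<Rightarrow> (nat \<Rightarrow> nat \<Rightarrow> real) \<Rightarrow> (nat \<Rightarrow> real) \<Rightarrow> (nat \<Rightarrow> real) \<Rightarrow> (nat \<Rightarrow> real) \<Rightarrow> real mat" where
  "FC N Nb Ct Lt Rt RL R k1 k2 k3 =
     mat (3 * N) (3 * N)
       (\<lambda>(r, c). FC_block Nb Ct Lt Rt RL R k1 k2 k3 (r div 3) (c div 3) $$ (r mod 3, c mod 3))"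

definition PiC :: "real \<Rightarrow> real \<Rightarrow> real \<Rightarrow> real \<Rightarrow> real \<Rightarrow> real mat" where
  "PiC sigma Ct Lt k1 k3 =
     (let eta = sigma * Ct;
          p22 = Lt * eta / (Ct * (1 - k1))
      in mat_diag 3 (\<lambda>a. if a = 0 then eta else if a = 1 then p22 else k3 / Lt * p22))"

definition PC :: "nat \<Rightarrow> real \<Rightarrow> (nat \<Rightarrow> real) \<Rightarrow> (nat \<Rightarrow> real) \<Rightarrow> (nat \<Rightarrow> real) \<Rightarrow> (nat \<Rightarrow> real) \<Rightarrow> real mat" where
  "PC N sigma Ct Lt k1 k3 = diag_block_mat (map (\<lambda>i. PiC sigma (Ct i) (Lt i) (k1 i) (k3 i)) [0..<N])"

end

theory Submission
  imports Defs
begin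

text \<open>Since \<open>P\<^sup>C = diag d\<close> is diagonal, the quadratic form of \<open>F\<^sup>T P + P F\<close> is twice
  \<open>\<Sum>\<^sub>r \<Sum>\<^sub>c d r x r F r c x c\<close>, and this sum splits along the 3x3 blocks of \<open>F\<^sup>C\<close>.
  Within a unit the diagonal entries of \<open>P\<^sub>i\<^sup>C\<close> are chosen so that all cross terms cancel,
  leaving only the damping term \<open>\<sigma> (k2 - Rt) / (1 - k1)\<close> times the squared current.
  Loads and lines act only on the voltages \<open>v i\<close>; scaled by \<open>\<eta> i = \<sigma> Ct i\<close> they contribute
  \<open>-\<sigma> \<Sum>\<^sub>i v i ^ 2 / RL i\<close> plus \<open>\<sigma>\<close> times the Laplacian form of the network; as the graph
  and the resistances are symmetric, pairing the terms of the edges \<open>(i, j)\<close> and \<open>(j, i)\<close> turns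
  the latter into \<open>-1/2\<close> times a sum of the squares \<open>(v i - v j) ^ 2 / R i j\<close>.\<close>

lemma diag_block_mat_mat_diag:
  "diag_block_mat (map (\<lambda>i. mat_diag k (f i)) [0..<N]) = mat_diag (k * N) (\<lambda>r. f (r div k) (r mod k))"
proof (induction N)
  case 0
  show ?case by (rule eq_matI) (auto simp: mat_diag_def)
next
  case (Suc N)
  show ?case
  proof (rule eq_matI)
    fix r c assume "r < dim_row (mat_diag (k * Suc N) (\<lambda>r. f (r div k) (r mod k)))"
      "c < dim_col (mat_diag (k * Suc N) (\<lambda>r. f (r div k) (r mod k)))"
    then have r: "r < k * N + k" and c: "c < k * N + k" by (auto simp: mat_diag_def)
    have last_block: "s div k = N" "s mod k = s - k * N" if "k * N \<le> s" "s < k * N + k" for s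
    proof -
      show "s div k = N" using that by (simp add: div_nat_eqI)
      then show "s mod k = s - k * N" by (metis minus_div_mult_eq_mod mult.commute)
    qed
    show "diag_block_mat (map (\<lambda>i. mat_diag k (f i)) [0..<Suc N]) $$ (r, c) =
          mat_diag (k * Suc N) (\<lambda>r. f (r div k) (r mod k)) $$ (r, c)"
      using r c Suc.IH last_block
      by (cases "r < k * N"; cases "c < k * N")
        (auto simp: diag_block_mat_last Let_def mat_diag_def)
  qed (simp_all add: diag_block_mat_last Let_def Suc.IH, simp_all add: mat_diag_def)
qed

lemma sum_nat_blocks:
  fixes f :: "nat \<Rightarrow> 'a::comm_monoid_add"
  shows "(\<Sum>r<k * N. f r) = (\<Sum>i<N. \<Sum>a<k. f (k * i + a))"
proof -
  have "(\<Sum>r<k * N. f r) = (\<Sum>i<N. sum f {i * k..<i * k + k})"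
    by (simp add: sum.nat_group mult.commute)
  also have "\<dots> = (\<Sum>i<N. \<Sum>a<k. f (k * i + a))"
    using sum.shift_bounds_nat_ivl[of f 0 "_ * k" k]
    by (simp add: atLeast0LessThan add.commute mult.commute)
  finally show ?thesis .
qed

lemma scalar_prod_mult_mat_vec_sum:
  fixes A :: "'a::comm_semiring_0 mat"
  assumes "A \<in> carrier_mat n n" and "x \<in> carrier_vec n"
  shows "x \<bullet> (A *\<^sub>v x) = (\<Sum>r<n. \<Sum>c<n. x $ r * A $$ (r, c) * x $ c)"
  using assms by (simp add: scalar_prod_def sum_distrib_left lessThan_atLeast0 mult.assoc)

lemma scalar_prod_lyapunov_mat_diag:
  fixes F :: "'a::comm_ring_1 mat"
  assumes F: "F \<in> carrier_mat n n" and x: "x \<in> carrier_vec n"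
  shows "x \<bullet> ((transpose_mat F * mat_diag n d + mat_diag n d * F) *\<^sub>v x)
       = 2 * (\<Sum>r<n. \<Sum>c<n. d r * x $ r * F $$ (r, c) * x $ c)"
proof -
  let ?M = "transpose_mat F * mat_diag n d + mat_diag n d * F"
  have M: "?M \<in> carrier_mat n n"
    using F by (meson add_carrier_mat mult_carrier_mat transpose_carrier_mat mat_diag_dim)
  have entry: "?M $$ (r, c) = F $$ (c, r) * d c + d r * F $$ (r, c)" if "r < n" "c < n" for r c
    using that F by (simp add: mat_diag_mult_left mat_diag_mult_right[of "transpose_mat F" n n])
  have "x \<bullet> (?M *\<^sub>v x) = (\<Sum>r<n. \<Sum>c<n. x $ r * ?M $$ (r, c) * x $ c)"
    using M x by (rule scalar_prod_mult_mat_vec_sum)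
  also have "\<dots> = (\<Sum>r<n. \<Sum>c<n. d c * x $ c * F $$ (c, r) * x $ r + d r * x $ r * F $$ (r, c) * x $ c)"
    by (intro sum.cong refl) (simp add: entry ring_distribs mult_ac)
  also have "\<dots> = (\<Sum>r<n. \<Sum>c<n. d c * x $ c * F $$ (c, r) * x $ r)
                 + (\<Sum>r<n. \<Sum>c<n. d r * x $ r * F $$ (r, c) * x $ c)"
    by (simp only: sum.distrib)
  also have "(\<Sum>r<n. \<Sum>c<n. d c * x $ c * F $$ (c, r) * x $ r)
           = (\<Sum>r<n. \<Sum>c<n. d r * x $ r * F $$ (r, c) * x $ c)"
    by (rule sum.swap)
  finally show ?thesis by (simp only: mult_2)
qed

lemma neg_semidef_lyapunov_mat_diag:
  fixes F :: "real mat"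
  assumes F: "F \<in> carrier_mat n n"
    and form: "\<And>x. (\<Sum>r<n. \<Sum>c<n. d r * x $ r * F $$ (r, c) * x $ c) \<le> 0"
  shows "neg_semidef n (transpose_mat F * mat_diag n d + mat_diag n d * F)"
proof -
  have "transpose_mat F * mat_diag n d + mat_diag n d * F \<in> carrier_mat n n"
    using F by (meson add_carrier_mat mult_carrier_mat transpose_carrier_mat mat_diag_dim)
  then show ?thesis
    unfolding neg_semidef_def using form scalar_prod_lyapunov_mat_diag[OF F] by simp
qed

lemma PiC_mat_diag: "PiC sigma Ct Lt k1 k3 = mat_diag 3 (\<lambda>a. PiC sigma Ct Lt k1 k3 $$ (a, a))"
  by (rule eq_matI) (auto simp: PiC_def Let_def mat_diag_def)

lemma PC_mat_diag:
  "PC N sigma Ct Lt k1 k3 = mat_diag (3 * N)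
     (\<lambda>r. PiC sigma (Ct (r div 3)) (Lt (r div 3)) (k1 (r div 3)) (k3 (r div 3)) $$ (r mod 3, r mod 3))"
proof -
  have "PC N sigma Ct Lt k1 k3 = diag_block_mat (map (\<lambda>i. mat_diag 3
          (\<lambda>a. PiC sigma (Ct i) (Lt i) (k1 i) (k3 i) $$ (a, a))) [0..<N])"
    unfolding PC_def by (metis PiC_mat_diag)
  then show ?thesis by (simp add: diag_block_mat_mat_diag)
qed

text \<open>The choice of \<open>p\<^sub>2\<^sub>2\<close> cancels the cross terms in \<open>u\<^sub>0 u\<^sub>1\<close>, and the third
  diagonal entry \<open>k\<^sub>3 p\<^sub>2\<^sub>2 / L\<^sub>t\<close> those in \<open>u\<^sub>1 u\<^sub>2\<close>.\<close>

lemma PiC_FiC_form: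
  assumes "Ct \<noteq> 0" "Lt \<noteq> 0" "k1 \<noteq> 1"
  shows "(\<Sum>a<3. \<Sum>b<3. PiC sigma Ct Lt k1 k3 $$ (a, a) * u a * FiC Ct Lt Rt k1 k2 k3 $$ (a, b) * u b)
       = sigma * (k2 - Rt) / (1 - k1) * (u 1)\<^sup>2"
proof -
  have "1 - k1 \<noteq> 0" using assms(3) by simp
  then show ?thesis
    using assms
    by (simp add: numeral_3_eq_3 PiC_def FiC_def mat_of_rows_list_def mat_diag_def Let_def,
        simp add: divide_simps power2_eq_square, simp add: algebra_simps)
qed

text \<open>The coefficient of \<open>e\<^sub>1 e\<^sub>1\<^sup>T\<close> in block \<open>(i, j)\<close> of \<open>F\<^sup>C\<close>, besides the local part \<open>F\<^sub>i\<^sup>C\<close>.\<close>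

definition FC_coupling ::
  "(nat \<Rightarrow> nat set) \<Rightarrow> (nat \<Rightarrow> real) \<Rightarrow> (nat \<Rightarrow> real) \<Rightarrow> (nat \<Rightarrow> nat \<Rightarrow> real) \<Rightarrow> nat \<Rightarrow> nat \<Rightarrow> real" where
  "FC_coupling Nb Ct RL R i j =
     (if i = j then - (1 / (RL i * Ct i) + (\<Sum>l\<in>Nb i. 1 / (R i l * Ct i)))
      else if j \<in> Nb i then 1 / (R i j * Ct i) else 0)"

lemma FiC_carrier: "FiC Ct Lt Rt k1 k2 k3 \<in> carrier_mat 3 3"
  unfolding FiC_def mat_of_rows_list_def carrier_mat_def by simp

lemma FC_block_entry:
  assumes "a < 3" "b < 3"
  shows "FC_block Nb Ct Lt Rt RL R k1 k2 k3 i j $$ (a, b)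
       = (if i = j then FiC (Ct i) (Lt i) (Rt i) (k1 i) (k2 i) (k3 i) $$ (a, b) else 0)
         + (if a = 0 \<and> b = 0 then FC_coupling Nb Ct RL R i j else 0)"
  using assms FiC_carrier[of "Ct i" "Lt i" "Rt i" "k1 i" "k2 i" "k3 i"]
  by (auto simp: FC_block_def FC_coupling_def E11_def)

lemma FC_block_form:
  "(\<Sum>a<3. \<Sum>b<3. PiC sigma (Ct i) (Lt i) (k1 i) (k3 i) $$ (a, a) * u a
      * FC_block Nb Ct Lt Rt RL R k1 k2 k3 i j $$ (a, b) * v b)
   = (if i = j then (\<Sum>a<3. \<Sum>b<3. PiC sigma (Ct i) (Lt i) (k1 i) (k3 i) $$ (a, a) * u a
        * FiC (Ct i) (Lt i) (Rt i) (k1 i) (k2 i) (k3 i) $$ (a, b) * v b) else 0)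
     + sigma * Ct i * FC_coupling Nb Ct RL R i j * u 0 * v 0"
proof -
  let ?P = "\<lambda>a. PiC sigma (Ct i) (Lt i) (k1 i) (k3 i) $$ (a, a)"
  let ?F = "FiC (Ct i) (Lt i) (Rt i) (k1 i) (k2 i) (k3 i)"
  let ?c = "FC_coupling Nb Ct RL R i j"
  have corner: "(\<Sum>a<3::nat. \<Sum>b<3::nat. if a = 0 \<and> b = 0 then y else 0) = y" for y :: real
    by (simp add: numeral_3_eq_3)
  have "(\<Sum>a<3. \<Sum>b<3. ?P a * u a * FC_block Nb Ct Lt Rt RL R k1 k2 k3 i j $$ (a, b) * v b)
      = (\<Sum>a<3. \<Sum>b<3. (if i = j then ?P a * u a * ?F $$ (a, b) * v b else 0)
                            + (if a = 0 \<and> b = 0 then ?P 0 * u 0 * ?c * v 0 else 0))"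
    by (intro sum.cong refl) (simp add: FC_block_entry distrib_left distrib_right)
  also have "\<dots> = (if i = j then (\<Sum>a<3. \<Sum>b<3. ?P a * u a * ?F $$ (a, b) * v b) else 0)
                  + ?P 0 * u 0 * ?c * v 0"
    by (simp only: sum.distrib corner) simp
  also have "?P 0 = sigma * Ct i"
    by (simp add: PiC_def Let_def mat_diag_def)
  finally show ?thesis by (simp add: mult.assoc)
qed

lemma FC_coupling_row_sum:
  assumes "Nb i \<subseteq> {..<N}" "i \<notin> Nb i" "i < N" "Ct i \<noteq> 0"
  shows "Ct i * (\<Sum>j<N. FC_coupling Nb Ct RL R i j * w j)
       = - w i / RL i + (\<Sum>j\<in>Nb i. (w j - w i) / R i j)"
proof -
  have cancel: "Ct i * (y / (x * Ct i)) = y / x" for x y using assms(4) by simp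
  have "FC_coupling Nb Ct RL R i j * w j
      = (if j = i then - (1 / (RL i * Ct i) + (\<Sum>l\<in>Nb i. 1 / (R i l * Ct i))) * w i else 0)
        + (if j \<in> Nb i then w j / (R i j * Ct i) else 0)" for j
    using assms(2) by (auto simp: FC_coupling_def)
  then have "(\<Sum>j<N. FC_coupling Nb Ct RL R i j * w j)
      = - (1 / (RL i * Ct i) + (\<Sum>l\<in>Nb i. 1 / (R i l * Ct i))) * w i
        + (\<Sum>j<N. if j \<in> Nb i then w j / (R i j * Ct i) else 0)"
    using assms(3) by (simp add: sum.distrib)
  also have "(\<Sum>j<N. if j \<in> Nb i then w j / (R i j * Ct i) else 0) = (\<Sum>j\<in>Nb i. w j / (R i j * Ct i))"
    using assms(1) by (simp add: sum.inter_restrict[symmetric] Int_absorb1)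
  finally have "Ct i * (\<Sum>j<N. FC_coupling Nb Ct RL R i j * w j)
      = - (Ct i * (1 / (RL i * Ct i)) + (\<Sum>l\<in>Nb i. Ct i * (1 / (R i l * Ct i)))) * w i
        + (\<Sum>j\<in>Nb i. Ct i * (w j / (R i j * Ct i)))"
    by (simp add: ring_distribs sum_distrib_left)
  also have "\<dots> = - (w i / RL i) + (\<Sum>j\<in>Nb i. w j / R i j - w i / R i j)"
    using assms(4) by (simp add: cancel sum_subtractf sum_distrib_left algebra_simps)
  finally show ?thesis
    by (simp add: diff_divide_distrib)
qed

lemma laplacian_form_nonpos:
  fixes v :: "nat \<Rightarrow> real"
  assumes sub: "\<forall>i<N. Nb i \<subseteq> {0..<N}"
    and sym: "\<forall>i<N. \<forall>j<N. j \<in> Nb i \<longleftrightarrow> i \<in> Nb j"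
    and R: "\<forall>i<N. \<forall>j\<in>Nb i. R i j = R j i \<and> R i j > 0"
  shows "(\<Sum>i<N. v i * (\<Sum>j\<in>Nb i. (v j - v i) / R i j)) \<le> 0"
proof -
  define E where "E = Sigma {..<N} Nb"
  define g where "g = (\<lambda>(i, j). v i * (v j - v i) / R i j)"
  have fin: "finite (Nb i)" if "i < N" for i
    using sub that finite_subset by blast
  have "(\<Sum>i<N. v i * (\<Sum>j\<in>Nb i. (v j - v i) / R i j)) = sum g E"
    unfolding E_def g_def using fin by (simp add: sum.Sigma sum_distrib_left)
  moreover have "bij_betw prod.swap E E"
    unfolding E_def bij_betw_def inj_on_def using sub sym by (auto simp: image_iff) force+
  then have "sum (g \<circ> prod.swap) E = sum g E"
    by (rule sum.reindex_bij_betw[unfolded comp_def[symmetric]])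
  then have "2 * sum g E = (\<Sum>p\<in>E. g p + g (prod.swap p))"
    by (simp add: sum.distrib)
  moreover have "(\<Sum>p\<in>E. g p + g (prod.swap p)) \<le> 0"
  proof (rule sum_nonpos)
    fix p assume "p \<in> E"
    obtain i j where p: "p = (i, j)" "i < N" "j \<in> Nb i" using \<open>p \<in> E\<close> E_def by auto
    then have "R j i = R i j" "R i j > 0" using R by auto
    then have "g p + g (prod.swap p) = - (v i - v j)\<^sup>2 / R i j"
      unfolding p g_def by (simp add: field_simps power2_eq_square)
    also have "\<dots> \<le> 0" using \<open>R i j > 0\<close> by simp
    finally show "g p + g (prod.swap p) \<le> 0" .
  qed
  ultimately show ?thesis by linarith
qed

lemma damping_terms_nonpos:
  fixes sigma :: real
  assumes "sigma \<ge> 0"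
    and "\<And>i. i < N \<Longrightarrow> k1 i < 1" "\<And>i. i < N \<Longrightarrow> k2 i < Rt i" "\<And>i. i < N \<Longrightarrow> RL i > 0"
  shows "(\<Sum>i<N. sigma * (k2 i - Rt i) / (1 - k1 i) * (w i)\<^sup>2 - sigma * (v i)\<^sup>2 / RL i) \<le> 0"
proof (rule sum_nonpos)
  fix i assume "i \<in> {..<N}"
  then have "k1 i < 1" "k2 i < Rt i" "RL i > 0" using assms by auto
  then have "sigma * (k2 i - Rt i) / (1 - k1 i) \<le> 0"
    using \<open>sigma \<ge> 0\<close> by (simp add: divide_nonpos_pos mult_nonneg_nonpos)
  have "sigma * (k2 i - Rt i) / (1 - k1 i) * (w i)\<^sup>2 \<le> 0"
    using \<open>sigma * (k2 i - Rt i) / (1 - k1 i) \<le> 0\<close> by (rule mult_nonpos_nonneg) simp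
  moreover have "sigma * (v i)\<^sup>2 / RL i \<ge> 0"
    using \<open>sigma \<ge> 0\<close> \<open>RL i > 0\<close> by simp
  ultimately show "sigma * (k2 i - Rt i) / (1 - k1 i) * (w i)\<^sup>2 - sigma * (v i)\<^sup>2 / RL i \<le> 0"
    by linarith
qed

lemma FC_form_blocks:
  "(\<Sum>r<3 * N. \<Sum>c<3 * N.
      PiC sigma (Ct (r div 3)) (Lt (r div 3)) (k1 (r div 3)) (k3 (r div 3)) $$ (r mod 3, r mod 3)
      * x r * FC N Nb Ct Lt Rt RL R k1 k2 k3 $$ (r, c) * x c)
   = (\<Sum>i<N. \<Sum>j<N. \<Sum>a<3. \<Sum>b<3. PiC sigma (Ct i) (Lt i) (k1 i) (k3 i) $$ (a, a) * x (3 * i + a)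
        * FC_block Nb Ct Lt Rt RL R k1 k2 k3 i j $$ (a, b) * x (3 * j + b))"
proof -
  have "(\<Sum>r<3 * N. \<Sum>c<3 * N.
          PiC sigma (Ct (r div 3)) (Lt (r div 3)) (k1 (r div 3)) (k3 (r div 3)) $$ (r mod 3, r mod 3)
          * x r * FC N Nb Ct Lt Rt RL R k1 k2 k3 $$ (r, c) * x c)
      = (\<Sum>i<N. \<Sum>a<3. \<Sum>j<N. \<Sum>b<3. PiC sigma (Ct i) (Lt i) (k1 i) (k3 i) $$ (a, a) * x (3 * i + a)
           * FC_block Nb Ct Lt Rt RL R k1 k2 k3 i j $$ (a, b) * x (3 * j + b))"
    unfolding sum_nat_blocks by (intro sum.cong refl) (simp add: FC_def)
  then show ?thesis
    by (simp only: sum.swap[where A = "{..<3::nat}" and B = "{..<N}"])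
qed

lemma FC_PC_form:
  fixes x :: "nat \<Rightarrow> real"
  assumes nb_sub: "\<forall>i<N. Nb i \<subseteq> {0..<N}"
    and nb_irrefl: "\<forall>i<N. i \<notin> Nb i"
    and nonzero: "\<forall>i<N. Ct i \<noteq> 0 \<and> Lt i \<noteq> 0 \<and> k1 i \<noteq> 1"
  shows "(\<Sum>r<3 * N. \<Sum>c<3 * N.
            PiC sigma (Ct (r div 3)) (Lt (r div 3)) (k1 (r div 3)) (k3 (r div 3)) $$ (r mod 3, r mod 3)
            * x r * FC N Nb Ct Lt Rt RL R k1 k2 k3 $$ (r, c) * x c)
       = (\<Sum>i<N. sigma * (k2 i - Rt i) / (1 - k1 i) * (x (3 * i + 1))\<^sup>2 - sigma * (x (3 * i))\<^sup>2 / RL i)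
         + sigma * (\<Sum>i<N. x (3 * i) * (\<Sum>j\<in>Nb i. (x (3 * j) - x (3 * i)) / R i j))"
proof -
  let ?P = "\<lambda>i a. PiC sigma (Ct i) (Lt i) (k1 i) (k3 i) $$ (a, a)"
  let ?F = "\<lambda>i. FiC (Ct i) (Lt i) (Rt i) (k1 i) (k2 i) (k3 i)"
  have "(\<Sum>r<3 * N. \<Sum>c<3 * N. ?P (r div 3) (r mod 3) * x r * FC N Nb Ct Lt Rt RL R k1 k2 k3 $$ (r, c) * x c)
      = (\<Sum>i<N. \<Sum>j<N.
           (if i = j then (\<Sum>a<3. \<Sum>b<3. ?P i a * x (3 * i + a) * ?F i $$ (a, b) * x (3 * j + b)) else 0)
           + sigma * x (3 * i) * (Ct i * FC_coupling Nb Ct RL R i j * x (3 * j)))"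
    unfolding FC_form_blocks
    using FC_block_form[where u = "\<lambda>a. x (3 * _ + a)" and v = "\<lambda>b. x (3 * _ + b)"]
    by (simp add: mult_ac)
  also have "\<dots> = (\<Sum>i<N. (\<Sum>a<3. \<Sum>b<3. ?P i a * x (3 * i + a) * ?F i $$ (a, b) * x (3 * i + b))
           + sigma * x (3 * i) * (Ct i * (\<Sum>j<N. FC_coupling Nb Ct RL R i j * x (3 * j))))"
    by (intro sum.cong refl) (simp add: sum.distrib sum_distrib_left mult_ac)
  also have "\<dots> = (\<Sum>i<N. sigma * (k2 i - Rt i) / (1 - k1 i) * (x (3 * i + 1))\<^sup>2
           + sigma * x (3 * i) * (- x (3 * i) / RL i + (\<Sum>j\<in>Nb i. (x (3 * j) - x (3 * i)) / R i j)))"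
    (is "(\<Sum>i<N. ?lhs i) = (\<Sum>i<N. ?rhs i)")
  proof (intro sum.cong refl)
    fix i assume "i \<in> {..<N}"
    then have "i < N" "Nb i \<subseteq> {..<N}" "i \<notin> Nb i" "Ct i \<noteq> 0" "Lt i \<noteq> 0" "k1 i \<noteq> 1"
      using nb_sub nb_irrefl nonzero by (auto simp flip: atLeast0LessThan)
    then show "?lhs i = ?rhs i"
      using FC_coupling_row_sum[of Nb i N Ct RL R "\<lambda>j. x (3 * j)"] by (simp add: PiC_FiC_form)
  qed
  also have "\<dots> = (\<Sum>i<N. (sigma * (k2 i - Rt i) / (1 - k1 i) * (x (3 * i + 1))\<^sup>2
                          - sigma * (x (3 * i))\<^sup>2 / RL i)
           + sigma * (x (3 * i) * (\<Sum>j\<in>Nb i. (x (3 * j) - x (3 * i)) / R i j)))"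
    by (intro sum.cong refl) (simp add: ring_distribs power2_eq_square)
  finally show ?thesis
    by (simp only: sum.distrib sum_distrib_left)
qed

theorem proposition3:
  fixes N :: nat and Nb :: "nat \<Rightarrow> nat set"
    and Ct Lt Rt RL k1 k2 k3 :: "nat \<Rightarrow> real" and R :: "nat \<Rightarrow> nat \<Rightarrow> real"
    and sigma :: real
  assumes "N \<ge> 1"
    and nb_sub: "\<forall>i<N. Nb i \<subseteq> {0..<N}"
    and nb_irrefl: "\<forall>i<N. i \<notin> Nb i"
    and nb_sym: "\<forall>i<N. \<forall>j<N. j \<in> Nb i \<longleftrightarrow> i \<in> Nb j"
    and pos: "\<forall>i<N. Ct i > 0 \<and> Lt i > 0 \<and> Rt i > 0 \<and> RL i > 0"
    and gains: "\<forall>i<N. k1 i < 1 \<and> k2 i < Rt i \<and> k3 i > 0"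
    and Rsym: "\<forall>i<N. \<forall>j\<in>Nb i. R i j = R j i \<and> R i j > 0"
    and "sigma > 0"
  shows "neg_semidef (3 * N)
           (transpose_mat (FC N Nb Ct Lt Rt RL R k1 k2 k3) * PC N sigma Ct Lt k1 k3
            + PC N sigma Ct Lt k1 k3 * FC N Nb Ct Lt Rt RL R k1 k2 k3)"
proof -
  have nonzero: "\<forall>i<N. Ct i \<noteq> 0 \<and> Lt i \<noteq> 0 \<and> k1 i \<noteq> 1" using pos gains by force
  have "(\<Sum>r<3 * N. \<Sum>c<3 * N.
          PiC sigma (Ct (r div 3)) (Lt (r div 3)) (k1 (r div 3)) (k3 (r div 3)) $$ (r mod 3, r mod 3)
          * x $ r * FC N Nb Ct Lt Rt RL R k1 k2 k3 $$ (r, c) * x $ c) \<le> 0" for x :: "real vec"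
  proof -
    have "(\<Sum>i<N. sigma * (k2 i - Rt i) / (1 - k1 i) * (x $ (3 * i + 1))\<^sup>2
                  - sigma * (x $ (3 * i))\<^sup>2 / RL i) \<le> 0"
      using \<open>sigma > 0\<close> pos gains by (intro damping_terms_nonpos) auto
    moreover have "(\<Sum>i<N. x $ (3 * i) * (\<Sum>j\<in>Nb i. (x $ (3 * j) - x $ (3 * i)) / R i j)) \<le> 0"
      using nb_sub nb_sym Rsym by (rule laplacian_form_nonpos)
    ultimately show ?thesis
      unfolding FC_PC_form[OF nb_sub nb_irrefl nonzero] using \<open>sigma > 0\<close>
      by (intro add_nonpos_nonpos mult_nonneg_nonpos) simp_all
  qed
  then show ?thesis
    unfolding PC_mat_diag by (intro neg_semidef_lyapunov_mat_diag) (simp_all add: FC_def)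
qed

end
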